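(* Let $U$ be a Hilbert space, $\widetilde H_{i+1}: U\rightrightarrows U$, and $M_{i+1}, Z_{i+1}\in\mathcal{L}(U;U)$ with $Z_{i+1}M_{i+1}$ self-adjoint, positive definite and invertible. Let $u^i, u^{i+1}\in U$ satisfy $0\in\widetilde H_{i+1}(u^{i+1}) + M_{i+1}(u^{i+1}-u^i)$. Then \[ \tfrac12\|u^{i+1}-u^i\|^2_{Z_{i+1}M_{i+1}} \ge \tfrac12\operatorname{dist}^2_{Z_{i+1}^*(Z_{i+1}M_{i+1})^{-1}Z_{i+1}}\big(0, \widetilde H_{i+1}(u^{i+1})\big). \]
   Context: For $T\in\mathcal{L}(U;U)$: $\|x\|_T^2:=\langle Tx,x\rangle$ and $\operatorname{dist}^2_T(z,A):=\inf_{u\in A}\|z-u\|_T^2$. *)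

theory Defs
  imports "HOL-Analysis.Analysis"
begin

definition sqnormT :: "('a::real_inner \<Rightarrow> 'a) \<Rightarrow> 'a \<Rightarrow> real" where
  "sqnormT T x = inner (T x) x"

definition distT2 :: "('a::real_inner \<Rightarrow> 'a) \<Rightarrow> 'a \<Rightarrow> 'a set \<Rightarrow> real" where
  "distT2 T z A = (INF u\<in>A. sqnormT T (z - u))"

definition self_adjoint_op :: "('a::real_inner \<Rightarrow> 'a) \<Rightarrow> bool" where
  "self_adjoint_op T \<longleftrightarrow> (\<forall>x y. inner (T x) y = inner x (T y))"

definition pos_def_op :: "('a::real_inner \<Rightarrow> 'a) \<Rightarrow> bool" where
  "pos_def_op T \<longleftrightarrow> (\<forall>x. x \<noteq> 0 \<longrightarrow> inner (T x) x > 0)"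

end

theory Submission
  imports Defs
begin

(* Write A = Z M and T = adjoint Z o inv A o Z. The inclusion gives -M (u' - u) in H u', and
  for every v the T-norm of M v is <inv A (A v), Z (M v)> = <v, A v>, so the T-distance from 0
  to H u', an infimum, is at most the A-norm of u' - u. The only analytic input is that the
  adjoint of a bounded linear map exists on a Hilbert space, which follows from the Riesz
  representation theorem, proved via the element of minimal norm in a level set of the
  functional. *)

lemma norm_diff_square_parallelogram:
  fixes a b :: "'a::real_inner"
  shows "norm (a - b)^2 = 2 * norm a ^2 + 2 * norm b ^2 - 4 * norm ((1/2) *\<^sub>R (a + b))^2"
  by (simp add: power2_norm_eq_inner inner_simps inner_commute algebra_simps)

lemma minimizing_sequence_Cauchy:
  fixes X :: "nat \<Rightarrow> 'a::real_inner"
  assumes midpoint: "\<And>a b. a \<in> S \<Longrightarrow> b \<in> S \<Longrightarrow> (1/2) *\<^sub>R (a + b) \<in> S"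
    and lower: "\<And>x. x \<in> S \<Longrightarrow> d \<le> norm x ^ 2"
    and X_in: "\<And>n. X n \<in> S"
    and X_small: "\<And>n. norm (X n) ^ 2 < d + 1 / real (Suc n)"
  shows "Cauchy X"
proof (rule metric_CauchyI)
  have dist_bound: "norm (X m - X n)^2 \<le> 2 / real (Suc m) + 2 / real (Suc n)" for m n
    using lower[OF midpoint[OF X_in[of m] X_in[of n]]] norm_diff_square_parallelogram[of "X m" "X n"]
      X_small[of m] X_small[of n] by linarith
  fix e :: real
  assume e: "e > 0"
  obtain N where N: "4 / e^2 < real (Suc N)"
    using reals_Archimedean2 by (metis less_Suc_eq of_nat_less_iff order.strict_trans)
  have N': "4 / real (Suc N) < e^2"
    using N e by (simp add: field_simps)
  show "\<exists>M. \<forall>m\<ge>M. \<forall>n\<ge>M. dist (X m) (X n) < e"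
  proof (intro exI allI impI)
    fix m n
    assume "N \<le> m" "N \<le> n"
    then have "2 / real (Suc m) \<le> 2 / real (Suc N)" "2 / real (Suc n) \<le> 2 / real (Suc N)"
      by (simp_all add: frac_le)
    then have "norm (X m - X n)^2 < e^2"
      using dist_bound[of m n] N' by linarith
    with e show "dist (X m) (X n) < e"
      by (simp add: dist_norm power_less_imp_less_base)
  qed
qed

lemma bounded_linear_level_set_min_norm:
  fixes f :: "'a::{real_inner, complete_space} \<Rightarrow> real"
  assumes "bounded_linear f" and "f x1 = 1"
  obtains y where "f y = 1" and "\<And>x. f x = 1 \<Longrightarrow> norm y \<le> norm x"
proof -
  interpret f: bounded_linear f by fact
  define S where "S = {x. f x = 1}"
  define d where "d = Inf ((\<lambda>x. norm x ^ 2) ` S)"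
  have bdd: "bdd_below ((\<lambda>x. norm x ^ 2) ` S)"
    by (rule bdd_belowI[of _ 0]) auto
  have lower: "d \<le> norm x ^ 2" if "x \<in> S" for x
    unfolding d_def using bdd that by (auto intro: cInf_lower)
  have "\<exists>x. x \<in> S \<and> norm x ^ 2 < d + 1 / real (Suc n)" for n
    using cInf_lessD[of "(\<lambda>x. norm x ^ 2) ` S" "d + 1 / real (Suc n)"] assms(2)
    by (auto simp: S_def d_def)
  then obtain X where X_in: "\<And>n. X n \<in> S"
    and X_small: "\<And>n. norm (X n) ^ 2 < d + 1 / real (Suc n)"
    by metis
  have "Cauchy X"
    by (rule minimizing_sequence_Cauchy[OF _ lower X_in X_small])
      (simp add: S_def f.scale f.add)
  then obtain y where lim: "X \<longlonglongrightarrow> y"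
    using Cauchy_convergent_iff convergent_def by blast
  have "(\<lambda>n. f (X n)) \<longlonglongrightarrow> f y"
    by (rule f.tendsto[OF lim])
  moreover have "(\<lambda>n. f (X n)) = (\<lambda>n. 1)"
    using X_in by (simp add: S_def)
  ultimately have "f y = 1"
    using LIMSEQ_unique tendsto_const by metis
  moreover have "norm y ^ 2 \<le> d + 0"
  proof (rule LIMSEQ_le)
    show "(\<lambda>n. norm (X n) ^ 2) \<longlonglongrightarrow> norm y ^ 2"
      by (intro tendsto_intros lim)
    show "(\<lambda>n. d + 1 / real (Suc n)) \<longlonglongrightarrow> d + 0"
      by (intro tendsto_intros LIMSEQ_inverse_real_of_nat[unfolded inverse_eq_divide])
  qed (use X_small less_imp_le in blast)
  then have "norm y \<le> norm x" if "f x = 1" for x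
    using lower[of x] that by (simp add: S_def power2_le_imp_le)
  ultimately show ?thesis
    using that by blast
qed

lemma min_norm_orthogonal_kernel:
  fixes f :: "'a::real_inner \<Rightarrow> real"
  assumes "bounded_linear f"
    and min: "\<And>x. f x = 1 \<Longrightarrow> norm y \<le> norm x"
    and "f y = 1" and "f k = 0"
  shows "inner y k = 0"
proof (cases "k = 0")
  case False
  interpret f: bounded_linear f by fact
  define t where "t = - inner y k / inner k k"
  have kk: "inner k k > 0"
    using False by simp
  have "f (y + t *\<^sub>R k) = 1"
    using assms(3,4) by (simp add: f.add f.scale)
  then have "inner y y \<le> inner (y + t *\<^sub>R k) (y + t *\<^sub>R k)"
    using min by (simp add: norm_le)
  also have "\<dots> = inner y y - (inner y k)^2 / inner k k"
    using kk by (simp add: t_def inner_simps inner_commute field_simps power2_eq_square)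
  finally have "(inner y k)^2 / inner k k \<le> 0"
    by simp
  then show ?thesis
    using kk by (simp add: divide_le_0_iff)
qed simp

theorem bounded_linear_riesz_representation:
  fixes f :: "'a::{real_inner, complete_space} \<Rightarrow> real"
  assumes "bounded_linear f"
  shows "\<exists>z. \<forall>x. f x = inner x z"
proof (cases "\<forall>x. f x = 0")
  case False
  interpret f: bounded_linear f by fact
  obtain x0 where x0: "f x0 \<noteq> 0"
    using False by blast
  have "f ((1 / f x0) *\<^sub>R x0) = 1"
    using x0 by (simp add: f.scale)
  then obtain y where y: "f y = 1" and min: "\<And>x. f x = 1 \<Longrightarrow> norm y \<le> norm x"
    using bounded_linear_level_set_min_norm[OF assms] by blast
  have y_nz: "y \<noteq> 0"
    using y f.zero by auto
  show ?thesis
  proof (intro exI allI)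
    fix x
    have "f (x - f x *\<^sub>R y) = 0"
      using y by (simp add: f.diff f.scale)
    from min_norm_orthogonal_kernel[OF assms min y this]
    have "inner y x = f x * inner y y"
      by (simp add: inner_simps)
    then show "f x = inner x ((1 / inner y y) *\<^sub>R y)"
      using y_nz by (simp add: inner_commute field_simps)
  qed
qed (intro exI[of _ 0]; simp)

lemma adjoint_works_complete:
  fixes Z :: "'a::{real_inner, complete_space} \<Rightarrow> 'b::real_inner"
  assumes "bounded_linear Z"
  shows "inner (Z x) y = inner x (adjoint Z y)"
proof -
  have "\<exists>z. \<forall>x. inner (Z x) y = inner x z" for y
    by (rule bounded_linear_riesz_representation)
      (intro bounded_linear_inner_left_comp assms)
  then have "\<exists>g. \<forall>x y. inner (Z x) y = inner x (g y)"
    by metis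
  then have "\<forall>x y. inner (Z x) y = inner x (adjoint Z y)"
    unfolding adjoint_def by (rule someI_ex)
  then show ?thesis
    by blast
qed


lemma distT2_le_sqnormT:
  assumes "\<And>x. 0 \<le> sqnormT T x" and "a \<in> A"
  shows "distT2 T z A \<le> sqnormT T (z - a)"
  unfolding distT2_def
  by (rule cINF_lower[OF _ assms(2)]) (auto intro: bdd_belowI[of _ 0] assms(1))

lemma sqnormT_adjoint_inverse_comp:
  fixes M :: "'a::real_inner \<Rightarrow> 'b::{real_inner, complete_space}" and Z :: "'b \<Rightarrow> 'a"
  assumes "bounded_linear Z" and "inj (Z \<circ> M)"
  shows "sqnormT (adjoint Z \<circ> inv (Z \<circ> M) \<circ> Z) (M v) = sqnormT (Z \<circ> M) v"
  using assms
  by (simp add: sqnormT_def adjoint_works_complete[symmetric] inner_commute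
      inv_f_f[of "Z \<circ> M", simplified])

lemma sqnormT_adjoint_inverse_comp_nonneg:
  fixes M :: "'a::real_inner \<Rightarrow> 'b::{real_inner, complete_space}" and Z :: "'b \<Rightarrow> 'a"
  assumes "bounded_linear Z" and "surj (Z \<circ> M)" and "pos_def_op (Z \<circ> M)"
  shows "0 \<le> sqnormT (adjoint Z \<circ> inv (Z \<circ> M) \<circ> Z) x"
proof -
  define w where "w = inv (Z \<circ> M) (Z x)"
  have "Z (M w) = Z x"
    using assms(2) by (simp add: w_def surj_f_inv_f[of "Z \<circ> M", simplified])
  then have "sqnormT (adjoint Z \<circ> inv (Z \<circ> M) \<circ> Z) x = inner ((Z \<circ> M) w) w"
    using assms(1) by (simp add: sqnormT_def w_def adjoint_works_complete[symmetric] inner_commute)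
  also have "\<dots> \<ge> 0"
    using assms(3) unfolding pos_def_op_def by (cases "w = 0") (auto simp: less_imp_le)
  finally show ?thesis .
qed

theorem lemma3p13:
  fixes H :: "'a::{real_inner, complete_space} \<Rightarrow> 'a set"
    and M Z :: "'a \<Rightarrow> 'a"
    and u u' :: 'a
  assumes "bounded_linear M" and "bounded_linear Z"
    and "self_adjoint_op (Z \<circ> M)"
    and "pos_def_op (Z \<circ> M)"
    and "bij (Z \<circ> M)"
    and "bounded_linear (inv (Z \<circ> M))"
    and "0 \<in> (\<lambda>h. h + M (u' - u)) ` H u'"
  shows "(1/2) * sqnormT (Z \<circ> M) (u' - u)
           \<ge> (1/2) * distT2 (adjoint Z \<circ> inv (Z \<circ> M) \<circ> Z) 0 (H u')"
proof -
  let ?T = "adjoint Z \<circ> inv (Z \<circ> M) \<circ> Z"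
  obtain h where h: "h \<in> H u'" and "0 = h + M (u' - u)"
    using assms(7) by blast
  then have h_eq: "0 - h = M (u' - u)"
    by (metis add.commute add_implies_diff diff_0)
  have "distT2 ?T 0 (H u') \<le> sqnormT ?T (0 - h)"
    using distT2_le_sqnormT sqnormT_adjoint_inverse_comp_nonneg assms(2,4,5) h
    by (metis bij_is_surj)
  also have "\<dots> = sqnormT (Z \<circ> M) (u' - u)"
    using h_eq sqnormT_adjoint_inverse_comp assms(2,5) by (metis bij_is_inj)
  finally show ?thesis
    by simp
qed

end
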